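(* Let $\alpha\in(0,\pi)$, $a\in A_N$, $d\in\{\pm1\}^N$, $\gamma_n=d_n-\cos\alpha$, $\mu^*_{a,d}=\sum_{n=1}^N\gamma_n\mu_{a_n}$, and \[ \lambda_n=\gamma_n\log(2-2a_n^2)+\sum_{k\ne n}\gamma_k\mu_{a_k}(a_n),\qquad n=1,\dots,N. \] Then there exists a constant $C=C(a)>0$ such that \[ \Big|\mu^*_{a,d}(a_n\pm r)-\lambda_n-\gamma_n\log\frac1r\Big|\le Cr \] for all $r\in(0,\rho(a)]$ and all $n=1,\dots,N$.
   Context: $A_N=\{a\in(-1,1)^N:-1<a_1<\dots<a_N<1\}$; $\rho(a)=\frac12\min\{2a_1+2,a_2-a_1,\dots,a_N-a_{N-1},2-2a_N\}$. Let $\mu(x_1)=\log(1+\sqrt{1-x_1^2})-\log|x_1|$ for $x_1\in(-1,1)\setminus\{0\}$ and, for $b\in(-1,1)$, $\mu_b(x_1)=\mu\big(\frac{x_1-b}{1-bx_1}\big)$ for $x_1\in(-1,1)\setminus\{b\}$. *)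

theory Defs
  imports Complex_Main
begin

text \<open>Points are indexed 1..N: a :: nat \<Rightarrow> real, only a 1, ..., a N matter.\<close>

definition in_A :: "nat \<Rightarrow> (nat \<Rightarrow> real) \<Rightarrow> bool" where
  "in_A N a \<longleftrightarrow> (\<forall>k\<in>{1..N}. -1 < a k \<and> a k < 1) \<and> (\<forall>k. 1 \<le> k \<and> k < N \<longrightarrow> a k < a (Suc k))"

definition rho :: "nat \<Rightarrow> (nat \<Rightarrow> real) \<Rightarrow> real" where
  "rho N a = (1/2) * Min ({2 * a 1 + 2, 2 - 2 * a N} \<union> {a (Suc k) - a k | k. 1 \<le> k \<and> k < N})"

definition mu :: "real \<Rightarrow> real" where
  "mu x = ln (1 + sqrt (1 - x\<^sup>2)) - ln \<bar>x\<bar>"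

definition mu_b :: "real \<Rightarrow> real \<Rightarrow> real" where
  "mu_b b x = mu ((x - b) / (1 - b * x))"

end

theory Submission
  imports Defs
begin

text \<open>
  With \<open>t = (y - b) / (1 - b y)\<close> one has \<open>1 - t\<^sup>2 = (1 - b\<^sup>2) (1 - y\<^sup>2) / (1 - b y)\<^sup>2\<close>, so the
  factor \<open>1 - b y\<close> cancels and \<open>\<mu>\<^sub>b(y) = ln (1 - b y + sqrt ((1 - b\<^sup>2) (1 - y\<^sup>2))) - ln \<bar>y - b\<bar>\<close>.
  The first logarithm equals \<open>ln (2 - 2 b\<^sup>2)\<close> at \<open>y = b\<close> and is Lipschitz near every base
  point at distance \<open>\<rho>\<close> from \<open>\<plusminus>1\<close>. At \<open>y = a\<^sub>n \<plusminus> r\<close> the second logarithm is exactly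
  \<open>ln (1/r)\<close> for \<open>b = a\<^sub>n\<close>, and Lipschitz for \<open>b = a\<^sub>k\<close>, \<open>k \<noteq> n\<close>, since \<open>a\<^sub>k\<close> stays at
  distance \<open>\<rho>\<close>. Summing the \<open>N\<close> errors with \<open>\<bar>\<gamma>\<^sub>k\<bar> \<le> 2\<close> gives a bound \<open>C r\<close>, where \<open>C\<close>
  depends only on \<open>N\<close> and \<open>\<rho>(a)\<close>.
\<close>

lemma abs_ln_diff_le:
  fixes u v m :: real
  assumes "0 < m" "m \<le> u" "m \<le> v"
  shows "\<bar>ln u - ln v\<bar> \<le> \<bar>u - v\<bar> / m"
proof -
  have le: "ln p - ln q \<le> (p - q) / m" if "m \<le> p" "m \<le> q" "q \<le> p" for p q :: real
  proof -
    have "ln p - ln q = ln (p / q)" using that assms by (simp add: ln_div)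
    also have "\<dots> \<le> p / q - 1" using that assms by (intro ln_le_minus_one) simp
    also have "\<dots> = (p - q) / q" using that assms by (simp add: field_simps)
    also have "\<dots> \<le> (p - q) / m" using that assms by (intro divide_left_mono) auto
    finally show ?thesis .
  qed
  show ?thesis
    using le[of u v] le[of v u] assms by (cases "v \<le> u") (auto simp: abs_if)
qed

lemma abs_sqrt_diff_le:
  fixes u v :: real
  assumes "0 \<le> u" "0 < v"
  shows "\<bar>sqrt u - sqrt v\<bar> \<le> \<bar>u - v\<bar> / sqrt v"
proof -
  have "\<bar>sqrt u - sqrt v\<bar> * sqrt v \<le> \<bar>sqrt u - sqrt v\<bar> * (sqrt u + sqrt v)"
    using assms by (intro mult_left_mono) auto
  also have "\<dots> = \<bar>(sqrt u - sqrt v) * (sqrt u + sqrt v)\<bar>"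
    using assms by (simp add: abs_mult)
  also have "(sqrt u - sqrt v) * (sqrt u + sqrt v) = u - v"
    using assms by (simp add: algebra_simps)
  finally show ?thesis
    using assms by (simp add: pos_le_divide_eq)
qed

lemma one_minus_abs_le_one_minus_mult:
  fixes b y :: real
  assumes "\<bar>y\<bar> \<le> 1"
  shows "1 - \<bar>b\<bar> \<le> 1 - b * y"
proof -
  have "b * y \<le> \<bar>b\<bar> * \<bar>y\<bar>" by (metis abs_ge_self abs_mult)
  also have "\<dots> \<le> \<bar>b\<bar>" using assms by (intro mult_left_le) auto
  finally show ?thesis by simp
qed

lemma one_minus_square_ge:
  fixes y :: real
  assumes "\<bar>y\<bar> \<le> 1"
  shows "1 - \<bar>y\<bar> \<le> 1 - y\<^sup>2"
proof -
  have "y\<^sup>2 = \<bar>y\<bar> * \<bar>y\<bar>" by (simp add: power2_eq_square)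
  also have "\<dots> \<le> \<bar>y\<bar>" using assms by (intro mult_left_le) auto
  finally show ?thesis by simp
qed

definition mu_b_num :: "real \<Rightarrow> real \<Rightarrow> real" where
  "mu_b_num b y = 1 - b * y + sqrt ((1 - b\<^sup>2) * (1 - y\<^sup>2))"

lemma mu_b_num_ge:
  fixes b y :: real
  assumes "\<bar>b\<bar> \<le> 1" "\<bar>y\<bar> \<le> 1"
  shows "1 - \<bar>b\<bar> \<le> mu_b_num b y"
proof -
  have "0 \<le> (1 - b\<^sup>2) * (1 - y\<^sup>2)"
    using one_minus_square_ge[OF assms(1)] one_minus_square_ge[OF assms(2)] assms by simp
  then have "0 \<le> sqrt ((1 - b\<^sup>2) * (1 - y\<^sup>2))" by simp
  then show ?thesis
    unfolding mu_b_num_def using one_minus_abs_le_one_minus_mult[OF assms(2), of b] by linarith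
qed

lemma mu_b_num_self:
  fixes b :: real
  assumes "\<bar>b\<bar> \<le> 1"
  shows "mu_b_num b b = 2 - 2 * b\<^sup>2"
proof -
  have "0 \<le> 1 - b\<^sup>2" using one_minus_square_ge[OF assms] assms by simp
  then show ?thesis by (simp add: mu_b_num_def power2_eq_square[symmetric])
qed

lemma mu_b_eq_ln_num:
  fixes b y :: real
  assumes b: "\<bar>b\<bar> < 1" and y: "\<bar>y\<bar> \<le> 1" and "y \<noteq> b"
  shows "mu_b b y = ln (mu_b_num b y) - ln \<bar>y - b\<bar>"
proof -
  define D where "D = 1 - b * y"
  have D: "0 < D" using one_minus_abs_le_one_minus_mult[OF y, of b] b unfolding D_def by linarith
  have num: "0 < mu_b_num b y" using mu_b_num_ge[of b y] b y by linarith
  have "1 - ((y - b) / D)\<^sup>2 = (1 - b\<^sup>2) * (1 - y\<^sup>2) / D\<^sup>2"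
    using D unfolding D_def by (simp add: field_simps) (simp add: algebra_simps power2_eq_square)
  then have "1 + sqrt (1 - ((y - b) / D)\<^sup>2) = mu_b_num b y / D"
    using D by (simp add: real_sqrt_divide mu_b_num_def D_def field_simps)
  moreover have "\<bar>(y - b) / D\<bar> = \<bar>y - b\<bar> / D" using D by simp
  ultimately show ?thesis
    using D num \<open>y \<noteq> b\<close> by (simp add: mu_b_def mu_def D_def ln_div)
qed

lemma mu_b_num_lipschitz:
  fixes b c y p :: real
  assumes b: "\<bar>b\<bar> \<le> 1" and y: "\<bar>y\<bar> \<le> 1" and p: "0 < p" and c: "\<bar>c\<bar> + p \<le> 1"
  shows "\<bar>mu_b_num b y - mu_b_num b c\<bar> \<le> (1 + 2 / sqrt p) * \<bar>y - c\<bar>"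
proof -
  have c1: "\<bar>c\<bar> \<le> 1" using c p by linarith
  have b2: "0 \<le> 1 - b\<^sup>2" "1 - b\<^sup>2 \<le> 1" using one_minus_square_ge[OF b] b by auto
  have y2: "0 \<le> 1 - y\<^sup>2" using one_minus_square_ge[OF y] y by simp
  have c2: "p \<le> 1 - c\<^sup>2" using one_minus_square_ge[OF c1] c by linarith
  have "\<bar>sqrt (1 - y\<^sup>2) - sqrt (1 - c\<^sup>2)\<bar> \<le> \<bar>(1 - y\<^sup>2) - (1 - c\<^sup>2)\<bar> / sqrt (1 - c\<^sup>2)"
    using y2 c2 p by (intro abs_sqrt_diff_le) auto
  also have "\<dots> \<le> \<bar>y\<^sup>2 - c\<^sup>2\<bar> / sqrt p"
    using c2 p by (intro frac_le) (auto simp: abs_minus_commute)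
  also have "\<bar>y\<^sup>2 - c\<^sup>2\<bar> = \<bar>y - c\<bar> * \<bar>y + c\<bar>"
    by (simp add: power2_eq_square algebra_simps abs_mult[symmetric])
  also have "\<dots> \<le> \<bar>y - c\<bar> * 2"
    using y c1 by (intro mult_left_mono) auto
  finally have sq: "\<bar>sqrt (1 - y\<^sup>2) - sqrt (1 - c\<^sup>2)\<bar> \<le> 2 / sqrt p * \<bar>y - c\<bar>"
    using p by (simp add: field_simps)
  have "mu_b_num b y - mu_b_num b c
      = b * (c - y) + sqrt (1 - b\<^sup>2) * (sqrt (1 - y\<^sup>2) - sqrt (1 - c\<^sup>2))"
    unfolding mu_b_num_def real_sqrt_mult by (simp add: algebra_simps)
  also have "\<bar>\<dots>\<bar> \<le> \<bar>y - c\<bar> + 1 * (2 / sqrt p * \<bar>y - c\<bar>)"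
  proof (rule order_trans[OF abs_triangle_ineq add_mono])
    show "\<bar>b * (c - y)\<bar> \<le> \<bar>y - c\<bar>"
      using b by (simp add: abs_mult abs_minus_commute mult_left_le_one_le)
    show "\<bar>sqrt (1 - b\<^sup>2) * (sqrt (1 - y\<^sup>2) - sqrt (1 - c\<^sup>2))\<bar> \<le> 1 * (2 / sqrt p * \<bar>y - c\<bar>)"
      unfolding abs_mult using b2 sq by (intro mult_mono) auto
  qed
  finally show ?thesis by (simp add: algebra_simps)
qed

lemma ln_mu_b_num_lipschitz:
  fixes b c y p :: real
  assumes p: "0 < p" and b: "\<bar>b\<bar> + p \<le> 1" and c: "\<bar>c\<bar> + p \<le> 1" and y: "\<bar>y\<bar> \<le> 1"
  shows "\<bar>ln (mu_b_num b y) - ln (mu_b_num b c)\<bar> \<le> (1 + 2 / sqrt p) / p * \<bar>y - c\<bar>"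
proof -
  have b1: "\<bar>b\<bar> \<le> 1" and c1: "\<bar>c\<bar> \<le> 1" using b c p by linarith+
  have "\<bar>ln (mu_b_num b y) - ln (mu_b_num b c)\<bar> \<le> \<bar>mu_b_num b y - mu_b_num b c\<bar> / p"
    using mu_b_num_ge[OF b1 y] mu_b_num_ge[OF b1 c1] b p by (intro abs_ln_diff_le) auto
  also have "\<dots> \<le> (1 + 2 / sqrt p) * \<bar>y - c\<bar> / p"
    using mu_b_num_lipschitz[OF b1 y p c] p by (intro divide_right_mono) auto
  finally show ?thesis by simp
qed

lemma mu_b_log_singularity:
  fixes b y p :: real
  assumes p: "0 < p" and b: "\<bar>b\<bar> + p \<le> 1" and y: "\<bar>y\<bar> \<le> 1" "y \<noteq> b"
  shows "\<bar>mu_b b y - ln (2 - 2 * b\<^sup>2) - ln (1 / \<bar>y - b\<bar>)\<bar> \<le> (1 + 2 / sqrt p) / p * \<bar>y - b\<bar>"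
proof -
  have "mu_b b y - ln (2 - 2 * b\<^sup>2) - ln (1 / \<bar>y - b\<bar>) = ln (mu_b_num b y) - ln (mu_b_num b b)"
    using mu_b_eq_ln_num[OF _ y] mu_b_num_self[of b] b p by (simp add: ln_div)
  then show ?thesis
    using ln_mu_b_num_lipschitz[OF p b b y(1)] by simp
qed

lemma mu_b_lipschitz_off_singularity:
  fixes b c y p :: real
  assumes p: "0 < p" and b: "\<bar>b\<bar> + p \<le> 1" and c: "\<bar>c\<bar> + p \<le> 1" and y: "\<bar>y\<bar> \<le> 1"
    and yb: "p \<le> \<bar>y - b\<bar>" and cb: "p \<le> \<bar>c - b\<bar>"
  shows "\<bar>mu_b b y - mu_b b c\<bar> \<le> (2 + 2 / sqrt p) / p * \<bar>y - c\<bar>"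
proof -
  have "mu_b b y - mu_b b c
      = (ln (mu_b_num b y) - ln (mu_b_num b c)) - (ln (\<bar>y - b\<bar>) - ln (\<bar>c - b\<bar>))"
    using mu_b_eq_ln_num[of b y] mu_b_eq_ln_num[of b c] b c y yb cb p by auto
  also have "\<bar>\<dots>\<bar> \<le> (1 + 2 / sqrt p) / p * \<bar>y - c\<bar> + \<bar>y - c\<bar> / p"
  proof (rule order_trans[OF abs_triangle_ineq4 add_mono])
    show "\<bar>ln (mu_b_num b y) - ln (mu_b_num b c)\<bar> \<le> (1 + 2 / sqrt p) / p * \<bar>y - c\<bar>"
      using ln_mu_b_num_lipschitz[OF p b c y] .
    have "\<bar>ln (\<bar>y - b\<bar>) - ln (\<bar>c - b\<bar>)\<bar> \<le> \<bar>\<bar>y - b\<bar> - \<bar>c - b\<bar>\<bar> / p"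
      using abs_ln_diff_le[OF p yb cb] .
    also have "\<dots> \<le> \<bar>y - c\<bar> / p"
      using p by (intro divide_right_mono) (auto simp: abs_triangle_ineq3)
    finally show "\<bar>ln (\<bar>y - b\<bar>) - ln (\<bar>c - b\<bar>)\<bar> \<le> \<bar>y - c\<bar> / p" .
  qed
  also have "\<dots> = (2 + 2 / sqrt p) / p * \<bar>y - c\<bar>"
    using p by (simp add: field_simps)
  finally show ?thesis .
qed

lemma finite_rho_candidates:
  "finite ({2 * a 1 + 2, 2 - 2 * a N} \<union> {a (Suc k) - a k | k. 1 \<le> k \<and> k < N})"
proof -
  have "{a (Suc k) - a k | k. 1 \<le> k \<and> k < N} = (\<lambda>k. a (Suc k) - a k) ` {1..<N}"
    by auto
  then show ?thesis by simp
qed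

lemma rho_le:
  shows rho_le_left: "rho N a \<le> 1 + a 1"
    and rho_le_right: "rho N a \<le> 1 - a N"
    and rho_le_gap: "1 \<le> k \<Longrightarrow> k < N \<Longrightarrow> 2 * rho N a \<le> a (Suc k) - a k"
  using Min_le[OF finite_rho_candidates, of _ a N] unfolding rho_def by auto

lemma rho_pos:
  assumes "in_A N a" "1 \<le> N"
  shows "0 < rho N a"
proof -
  have "-1 < a 1" "a N < 1"
    using assms unfolding in_A_def by auto
  then have "\<forall>x \<in> {2 * a 1 + 2, 2 - 2 * a N} \<union> {a (Suc k) - a k | k. 1 \<le> k \<and> k < N}. 0 < x"
    using assms(1) unfolding in_A_def by auto
  then show ?thesis
    using finite_rho_candidates[of a N] unfolding rho_def by simp
qed

lemma in_A_gap:
  assumes A: "in_A N a" and ij: "1 \<le> i" "i < j" "j \<le> N"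
  shows "2 * rho N a \<le> a j - a i"
proof -
  have "0 < rho N a" using rho_pos[OF A] ij by simp
  then have "2 * rho N a \<le> of_nat (card {i..<j}) * (2 * rho N a)"
    using ij by simp
  also have "\<dots> \<le> (\<Sum>k = i..<j. a (Suc k) - a k)"
    using ij by (intro sum_bounded_below rho_le_gap) auto
  also have "\<dots> = a j - a i"
    using ij by (simp add: sum_Suc_diff')
  finally show ?thesis .
qed

lemma in_A_abs_diff_ge:
  assumes "in_A N a" "i \<in> {1..N}" "j \<in> {1..N}" "i \<noteq> j"
  shows "2 * rho N a \<le> \<bar>a i - a j\<bar>"
  using in_A_gap[OF assms(1), of i j] in_A_gap[OF assms(1), of j i] assms(2-4)
  by (cases "i < j") auto

lemma in_A_abs_add_rho_le:
  assumes A: "in_A N a" and n: "n \<in> {1..N}"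
  shows "\<bar>a n\<bar> + rho N a \<le> 1"
proof -
  have "0 < rho N a" using rho_pos[OF A] n by simp
  then have "a 1 \<le> a n" "a n \<le> a N"
    using in_A_gap[OF A, of 1 n] in_A_gap[OF A, of n N] n by (fastforce, fastforce)
  then show ?thesis using rho_le_left[of N a] rho_le_right[of N a] by linarith
qed

lemma mu_b_sum_expansion:
  fixes \<gamma> :: "nat \<Rightarrow> real"
  assumes A: "in_A N a" and n: "n \<in> {1..N}" and \<gamma>: "\<forall>k\<in>{1..N}. \<bar>\<gamma> k\<bar> \<le> G"
    and r: "0 < r" "r \<le> rho N a" and y: "\<bar>y - a n\<bar> = r"
  shows "\<bar>(\<Sum>k=1..N. \<gamma> k * mu_b (a k) y)
           - (\<gamma> n * ln (2 - 2 * (a n)\<^sup>2) + (\<Sum>k\<in>{1..N} - {n}. \<gamma> k * mu_b (a k) (a n)))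
           - \<gamma> n * ln (1 / r)\<bar>
         \<le> N * G * ((2 + 2 / sqrt (rho N a)) / rho N a) * r"
proof -
  define p where "p = rho N a"
  define L where "L = (2 + 2 / sqrt p) / p"
  define e where "e k = (if k = n then mu_b (a n) y - ln (2 - 2 * (a n)\<^sup>2) - ln (1 / r)
                         else mu_b (a k) y - mu_b (a k) (a n))" for k
  have p: "0 < p" using rho_pos[OF A] n unfolding p_def by simp
  have margin: "\<bar>a k\<bar> + p \<le> 1" if "k \<in> {1..N}" for k
    using in_A_abs_add_rho_le[OF A that] unfolding p_def .
  have y1: "\<bar>y\<bar> \<le> 1" using margin[OF n] y r unfolding p_def by linarith
  have e_le: "\<bar>e k\<bar> \<le> L * r" if k: "k \<in> {1..N}" for k
  proof (cases "k = n")
    case True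
    have "\<bar>e k\<bar> \<le> (1 + 2 / sqrt p) / p * r"
      using mu_b_log_singularity[OF p margin[OF n] y1] y r True unfolding e_def by auto
    also have "\<dots> \<le> L * r"
      unfolding L_def using p r by (intro mult_right_mono divide_right_mono) auto
    finally show ?thesis .
  next
    case False
    have gap: "2 * p \<le> \<bar>a n - a k\<bar>"
      using in_A_abs_diff_ge[OF A n k] False unfolding p_def by simp
    have "\<bar>a n - a k\<bar> \<le> \<bar>y - a n\<bar> + \<bar>y - a k\<bar>" by arith
    then have "p \<le> \<bar>y - a k\<bar>" "p \<le> \<bar>a n - a k\<bar>"
      using gap y r p unfolding p_def by linarith+
    then have "\<bar>e k\<bar> \<le> L * \<bar>y - a n\<bar>"
      using mu_b_lipschitz_off_singularity[OF p margin[OF k] margin[OF n] y1] False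
      unfolding e_def L_def by simp
    then show ?thesis using y by simp
  qed
  have "(\<Sum>k\<in>{1..N} - {n}. \<gamma> k * e k)
      = (\<Sum>k\<in>{1..N} - {n}. \<gamma> k * mu_b (a k) y) - (\<Sum>k\<in>{1..N} - {n}. \<gamma> k * mu_b (a k) (a n))"
    unfolding sum_subtractf[symmetric] by (intro sum.cong) (auto simp: e_def right_diff_distrib)
  then have "(\<Sum>k=1..N. \<gamma> k * mu_b (a k) y)
           - (\<gamma> n * ln (2 - 2 * (a n)\<^sup>2) + (\<Sum>k\<in>{1..N} - {n}. \<gamma> k * mu_b (a k) (a n)))
           - \<gamma> n * ln (1 / r)
        = (\<Sum>k=1..N. \<gamma> k * e k)"
    using n by (simp add: sum.remove e_def right_diff_distrib)
  also have "\<bar>\<dots>\<bar> \<le> (\<Sum>k=1..N. \<bar>\<gamma> k\<bar> * \<bar>e k\<bar>)"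
    using sum_abs[of "\<lambda>k. \<gamma> k * e k"] by (simp add: abs_mult)
  also have "\<dots> \<le> of_nat (card {1..N}) * (G * (L * r))"
  proof (rule sum_bounded_above)
    have G: "0 \<le> G" using \<gamma> n by force
    show "\<bar>\<gamma> k\<bar> * \<bar>e k\<bar> \<le> G * (L * r)" if "k \<in> {1..N}" for k
      using \<gamma> that by (intro mult_mono e_le G) auto
  qed
  finally show ?thesis unfolding L_def p_def by simp
qed

theorem proposition2p8:
  fixes \<alpha> :: real and N :: nat and a d \<gamma> lam :: "nat \<Rightarrow> real" and mustar :: "real \<Rightarrow> real"
  assumes "0 < \<alpha>" "\<alpha> < pi"
    and "in_A N a"
    and "\<forall>n\<in>{1..N}. d n = 1 \<or> d n = -1"
    and "\<And>n. \<gamma> n = d n - cos \<alpha>"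
    and "\<And>x. mustar x = (\<Sum>n=1..N. \<gamma> n * mu_b (a n) x)"
    and "\<And>n. lam n = \<gamma> n * ln (2 - 2 * (a n)\<^sup>2) + (\<Sum>k\<in>{1..N} - {n}. \<gamma> k * mu_b (a k) (a n))"
  shows "\<exists>C>0. \<forall>r. 0 < r \<and> r \<le> rho N a \<longrightarrow> (\<forall>n\<in>{1..N}.
           \<bar>mustar (a n + r) - lam n - \<gamma> n * ln (1 / r)\<bar> \<le> C * r \<and>
           \<bar>mustar (a n - r) - lam n - \<gamma> n * ln (1 / r)\<bar> \<le> C * r)"
proof (cases "N = 0")
  case True
  then show ?thesis by (intro exI[of _ 1]) auto
next
  case False
  define C where "C = N * 2 * ((2 + 2 / sqrt (rho N a)) / rho N a)"
  have "0 < rho N a" using rho_pos[OF assms(3)] False by simp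
  then have "0 < C" unfolding C_def using False
    by (intro divide_pos_pos mult_pos_pos) (auto intro: add_pos_nonneg)
  have \<gamma>: "\<forall>k\<in>{1..N}. \<bar>\<gamma> k\<bar> \<le> 2" \<comment> \<open>true for every \<open>\<alpha>\<close>\<close>
    using assms(4,5) cos_ge_minus_one[of \<alpha>] cos_le_one[of \<alpha>] by fastforce
  show ?thesis
  proof (intro exI[of _ C] conjI \<open>0 < C\<close> allI impI ballI)
    fix r n assume r: "0 < r \<and> r \<le> rho N a" and n: "n \<in> {1..N}"
    have "\<bar>mustar y - lam n - \<gamma> n * ln (1 / r)\<bar> \<le> C * r" if "\<bar>y - a n\<bar> = r" for y
      using mu_b_sum_expansion[OF assms(3) n \<gamma> _ _ that] r unfolding assms(6,7) C_def by simp
    then show "\<bar>mustar (a n + r) - lam n - \<gamma> n * ln (1 / r)\<bar> \<le> C * r"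
      and "\<bar>mustar (a n - r) - lam n - \<gamma> n * ln (1 / r)\<bar> \<le> C * r"
      using r by simp_all
  qed
qed

end
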